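(* Assume $2\le|\mathcal U_{\mathcal E}|\le T$. With $\delta=1/T^2$ and $T_1\ge|\mathcal U_{\mathcal E}|$, the regret of UCB-TSN satisfies $\mathcal R_\nu(T,\pi)=\tilde O\big(\sqrt{|\mathcal U_{\mathcal E}|T}+T_1\big)$.
   Context: Bandit with network interference: arm set $\mathcal K=[K]$, units $\mathcal U=[N]$, horizon $T$, fixed adjacency matrix $\mathbb H$. Choosing a super arm $A\in\mathcal K^{\mathcal U}$ in round $t$ yields for each unit $i$ the reward $r_{i,t}(A)=Y_i(A)+\eta_{i,t}$ with unknown $Y_i(A)\in[0,1]$ and i.i.d. zero-mean 1-sub-Gaussian noise. A fixed exposure mapping $\mathbf S:\mathcal U\times\mathcal K^{\mathcal U}\times\{\mathbb H\}\to\mathcal U_s$ assigns to $A$ the exposure super arm $(\mathbf S(i,A,\mathbb H))_{i}$. With a fixed partition $\mathcal C$ of $[N]$ into clusters, $\mathcal U_{\mathcal C}$ = exposure vectors constant on clusters, $\mathcal U_{\mathcal O}$ = exposure vectors realized by some $A$, $\mathcal U_{\mathcal E}=\mathcal U_{\mathcal C}\cap\mathcal U_{\mathcal O}$. For $S\in\mathcal U_{\mathcal E}$, $\tilde Y_i(S)=\sum_AY_i(A)\mathbb P(A\mid S)$ with $\mathbb P(\cdot\mid S)$ uniform over super arms whose exposure super arm is $S$; the exposure reward $\tilde r_{i,t}(S)$ is the reward $r_{i,t}(A)$ of such a uniformly drawn $A$. Regret of a policy $\pi$ choosing $S_t\in\mathcal U_{\mathcal E}$: $\mathcal R_\nu(T,\pi)=\frac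 TN\sum_i\tilde Y_i(S^* )-\frac1N\mathbb E_\pi[\sum_{t\le T}\sum_i\tilde r_{i,t}(S_t)]$, $S^*\in\arg\max_{S\in\mathcal U_{\mathcal E}}\sum_i\tilde Y_i(S)$; $\nu$ denotes the instance (reward distributions). Algorithm UCB-TSN (parameters $T_1\le T$, $\delta$): Sampling$(S)$ draws $A$ uniformly among super arms with exposure super arm $S$, pulls it and records $\tilde r_{i,t}(S)=r_{i,t}(A)$. Let $\mathcal N^t_S$ be the number of rounds $t'\le t$ with $S_{t'}=S$ and $\hat R_t(S)$ the average of $\frac1N\sum_i\tilde r_{i,t'}(S_{t'})$ over those rounds. Phase 1 ($t\le T_1$): play the elements of $\mathcal U_{\mathcal E}$ in round-robin order via Sampling (and output ATE estimates $\hat R_{T_1}(S_i)-\hat R_{T_1}(S_j)$). Phase 2 ($T_1<t\le T$): play $S_t=\arg\max_S\big(\hat R_{t-1}(S)+\sqrt{9\log(1/\delta)/\mathcal N^{t-1}_S}\big)$ via Sampling. $\tilde O$ hides polylogarithmic factors; orders are in $K,T$. *)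

theory Defs
  imports "HOL-Probability.Probability"
begin

text \<open>The exposure mapping Smap gets a unit, a super arm and the
  adjacency matrix H and returns an exposure value of type 'e.\<close>

definition superarms :: "nat \<Rightarrow> nat \<Rightarrow> (nat \<Rightarrow> nat) set" where
  "superarms N K = {..<N} \<rightarrow>\<^sub>E {..<K}"

definition expo_arm ::
  "nat \<Rightarrow> (nat \<Rightarrow> (nat \<Rightarrow> nat) \<Rightarrow> 'h \<Rightarrow> 'e) \<Rightarrow> 'h \<Rightarrow> (nat \<Rightarrow> nat) \<Rightarrow> (nat \<Rightarrow> 'e)" where
  "expo_arm N Smap H A = (\<lambda>i\<in>{..<N}. Smap i A H)"

definition UO :: "nat \<Rightarrow> nat \<Rightarrow> (nat \<Rightarrow> (nat \<Rightarrow> nat) \<Rightarrow> 'h \<Rightarrow> 'e) \<Rightarrow> 'h \<Rightarrow> (nat \<Rightarrow> 'e) set" where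
  "UO N K Smap H = expo_arm N Smap H ` superarms N K"

definition UC :: "nat \<Rightarrow> nat set set \<Rightarrow> (nat \<Rightarrow> 'e) set" where
  "UC N Cl = {S \<in> {..<N} \<rightarrow>\<^sub>E UNIV. \<forall>c\<in>Cl. \<forall>i\<in>c. \<forall>j\<in>c. S i = S j}"

definition UE :: "nat \<Rightarrow> nat \<Rightarrow> (nat \<Rightarrow> (nat \<Rightarrow> nat) \<Rightarrow> 'h \<Rightarrow> 'e) \<Rightarrow> 'h \<Rightarrow> nat set set
    \<Rightarrow> (nat \<Rightarrow> 'e) set" where
  "UE N K Smap H Cl = UC N Cl \<inter> UO N K Smap H"

definition preimg :: "nat \<Rightarrow> nat \<Rightarrow> (nat \<Rightarrow> (nat \<Rightarrow> nat) \<Rightarrow> 'h \<Rightarrow> 'e) \<Rightarrow> 'h \<Rightarrow> (nat \<Rightarrow> 'e)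
    \<Rightarrow> (nat \<Rightarrow> nat) set" where
  "preimg N K Smap H S = {A \<in> superarms N K. expo_arm N Smap H A = S}"

text \<open>Exposure mean reward tilde Y_i(S) (uniform P(A | S))\<close>
definition Ytil :: "nat \<Rightarrow> nat \<Rightarrow> (nat \<Rightarrow> (nat \<Rightarrow> nat) \<Rightarrow> 'h \<Rightarrow> 'e) \<Rightarrow> 'h
    \<Rightarrow> (nat \<Rightarrow> (nat \<Rightarrow> nat) \<Rightarrow> real) \<Rightarrow> nat \<Rightarrow> (nat \<Rightarrow> 'e) \<Rightarrow> real" where
  "Ytil N K Smap H Y i S =
     (\<Sum>A\<in>preimg N K Smap H S. Y i A) / real (card (preimg N K Smap H S))"

definition mean_exposure_reward :: "nat \<Rightarrow> nat \<Rightarrow> (nat \<Rightarrow> (nat \<Rightarrow> nat) \<Rightarrow> 'h \<Rightarrow> 'e) \<Rightarrow> 'h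
    \<Rightarrow> (nat \<Rightarrow> (nat \<Rightarrow> nat) \<Rightarrow> real) \<Rightarrow> (nat \<Rightarrow> 'e) \<Rightarrow> real" where
  "mean_exposure_reward N K Smap H Y S = (\<Sum>i<N. Ytil N K Smap H Y i S) / real N"

text \<open>A history is the list of (played exposure super arm, observed average reward
  (1/N) sum_i tilde r_{i,t}(S_t)) of the past rounds.\<close>
type_synonym 'e history = "((nat \<Rightarrow> 'e) \<times> real) list"

definition n_pulls :: "'e history \<Rightarrow> (nat \<Rightarrow> 'e) \<Rightarrow> nat" where
  "n_pulls h S = length (filter (\<lambda>p. fst p = S) h)"

definition R_hat :: "'e history \<Rightarrow> (nat \<Rightarrow> 'e) \<Rightarrow> real" where
  "R_hat h S = sum_list (map snd (filter (\<lambda>p. fst p = S) h)) / real (n_pulls h S)"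

definition ucb_index :: "real \<Rightarrow> 'e history \<Rightarrow> (nat \<Rightarrow> 'e) \<Rightarrow> real" where
  "ucb_index \<delta> h S = R_hat h S + sqrt (9 * ln (1 / \<delta>) / real (n_pulls h S))"

text \<open>UCB-TSN decision rule. enum lists the elements of U_E (round-robin order of
  phase 1; ties of the argmax in phase 2 are broken by this order). The current
  round is t = length h + 1.\<close>
definition ucb_tsn :: "(nat \<Rightarrow> 'e) list \<Rightarrow> nat \<Rightarrow> real \<Rightarrow> 'e history \<Rightarrow> (nat \<Rightarrow> 'e)" where
  "ucb_tsn enum T1 \<delta> h =
     (let t = Suc (length h) in
      if t \<le> T1 then enum ! ((t - 1) mod length enum)
      else hd (filter (\<lambda>S. \<forall>S'\<in>set enum. ucb_index \<delta> h S' \<le> ucb_index \<delta> h S) enum))"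

text \<open>Expected total (unit-averaged) reward collected in the next m rounds by the
  deterministic history-dependent policy pol, starting from history h, when playing
  S means: draw A uniformly from pre S, each unit i receives Y i A + eta_i with
  eta_1..eta_N i.i.d. according to noise (fresh in each round).\<close>
primrec exp_reward :: "nat \<Rightarrow> (nat \<Rightarrow> (nat \<Rightarrow> nat) \<Rightarrow> real) \<Rightarrow> real measure
    \<Rightarrow> ((nat \<Rightarrow> 'e) \<Rightarrow> (nat \<Rightarrow> nat) set) \<Rightarrow> ('e history \<Rightarrow> (nat \<Rightarrow> 'e))
    \<Rightarrow> nat \<Rightarrow> 'e history \<Rightarrow> real" where
  "exp_reward N Y noise pre pol 0 h = 0"
| "exp_reward N Y noise pre pol (Suc m) h =
     (let S = pol h in
      (\<Sum>A\<in>pre S. \<integral>eta. (let r = (\<Sum>i<N. Y i A + eta i) / real N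
                            in r + exp_reward N Y noise pre pol m (h @ [(S, r)]))
                      \<partial>(PiM {..<N} (\<lambda>_. noise)))
      / real (card (pre S)))"

definition regret :: "nat \<Rightarrow> nat \<Rightarrow> (nat \<Rightarrow> (nat \<Rightarrow> nat) \<Rightarrow> 'h \<Rightarrow> 'e) \<Rightarrow> 'h \<Rightarrow> nat set set
    \<Rightarrow> (nat \<Rightarrow> (nat \<Rightarrow> nat) \<Rightarrow> real) \<Rightarrow> real measure \<Rightarrow> ('e history \<Rightarrow> (nat \<Rightarrow> 'e))
    \<Rightarrow> nat \<Rightarrow> real" where
  "regret N K Smap H Cl Y noise pol T =
     real T * Max (mean_exposure_reward N K Smap H Y ` UE N K Smap H Cl)
     - exp_reward N Y noise (preimg N K Smap H) pol T []"

definition subgaussian_noise :: "real measure \<Rightarrow> bool" where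
  "subgaussian_noise \<eta> \<longleftrightarrow> prob_space \<eta> \<and> sets \<eta> = sets borel \<and>
     integrable \<eta> (\<lambda>x. x) \<and> (\<integral>x. x \<partial>\<eta>) = 0 \<and>
     (\<forall>s::real. (\<integral>\<^sup>+x. ennreal (exp (s * x)) \<partial>\<eta>) \<le> ennreal (exp (s\<^sup>2 / 2)))"

end

theory Submission
  imports Defs
begin

text \<open>Given the past, the observed unit-averaged reward of a round is the exposure mean of the
  played exposure super arm plus an error that is sub-Gaussian with variance proxy 5/4: Hoeffding's
  lemma handles the uniformly drawn super arm, and the average of the unit noises is 1-sub-Gaussian.
  Hence, for every exposure super arm S, pull count n and tilt l, the capped exponential process
  exp (l * (sum of the first n centred rewards of S) - 5/8 * l^2 * n) is a supermartingale, and
  a Chernoff argument shows that the empirical means leave their confidence intervals of width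
  sqrt (9 ln (T^2) / n) only with weight 2 |U_E| T / T^(36/5). Off this event, optimism makes a
  phase-2 round lose at most twice the confidence width of the chosen arm, which is at most
  9 sqrt (ln (T^2)) times the increment of the square root of its pull count. Summing these
  increments and applying Cauchy-Schwarz gives O (sqrt (|U_E| T log T)); phase 1 costs at most T1.\<close>

lemma inverse_sqrt_le_sqrt_increment:
  fixes x :: real
  assumes "1 \<le> x"
  shows "1 / sqrt x \<le> 3 * (sqrt (x + 1) - sqrt x)"
proof -
  define a b where "a = sqrt x" and "b = sqrt (x + 1)"
  have "1 \<le> a" "a \<le> b" using assms by (simp_all add: a_def b_def)
  have "b \<le> sqrt (4 * x)" unfolding b_def using assms by (intro real_sqrt_le_mono) simp
  then have "b \<le> 2 * a" by (simp add: a_def real_sqrt_mult)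
  have "1 = (b - a) * (b + a)"
    using assms by (simp add: a_def b_def algebra_simps flip: power2_eq_square)
  also have "\<dots> \<le> (b - a) * (3 * a)"
    using \<open>a \<le> b\<close> \<open>b \<le> 2 * a\<close> by (intro mult_left_mono) auto
  finally have "1 / a \<le> 3 * (b - a)"
    using \<open>1 \<le> a\<close> by (simp add: pos_divide_le_eq mult_ac)
  then show ?thesis by (simp add: a_def b_def)
qed

lemma sum_sqrt_le_sqrt_card_mult_sum:
  fixes g :: "'a \<Rightarrow> real"
  assumes "\<And>x. x \<in> A \<Longrightarrow> 0 \<le> g x"
  shows "(\<Sum>x\<in>A. sqrt (g x)) \<le> sqrt (real (card A) * (\<Sum>x\<in>A. g x))"
proof (rule real_le_rsqrt)
  have "(\<Sum>x\<in>A. sqrt (g x))\<^sup>2 \<le> (\<Sum>x\<in>A. (sqrt (g x))\<^sup>2) * real (card A)"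
    by (rule sum_squared_le_sum_of_squares)
  also have "\<dots> = real (card A) * (\<Sum>x\<in>A. g x)"
    using assms by (simp add: mult.commute)
  finally show "(\<Sum>x\<in>A. sqrt (g x))\<^sup>2 \<le> real (card A) * (\<Sum>x\<in>A. g x)" .
qed

lemma hoeffding_lemma_uniform_pos:
  fixes f :: "'a \<Rightarrow> real"
  assumes X: "finite X" "X \<noteq> {}" and f: "\<And>x. x \<in> X \<Longrightarrow> a \<le> f x \<and> f x \<le> b" and "l > 0"
  shows "(\<Sum>x\<in>X. exp (l * (f x - (\<Sum>y\<in>X. f y) / card X))) / card X \<le> exp (l\<^sup>2 * (b - a)\<^sup>2 / 8)"
proof -
  define p where "p = pmf_of_set X"
  have set_p: "set_pmf p = X" using X by (simp add: p_def)
  interpret interval_bounded_random_variable "measure_pmf p" f a b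
    by unfold_locales (use f in \<open>simp_all add: AE_measure_pmf_iff set_p\<close>)
  have mean: "measure_pmf.expectation p g = (\<Sum>x\<in>X. g x) / card X" for g :: "'a \<Rightarrow> real"
    unfolding p_def using X by (simp add: integral_pmf_of_set)
  have "ennreal (measure_pmf.expectation p (\<lambda>x. exp (l * (f x - measure_pmf.expectation p f))))
      = (\<integral>\<^sup>+x. ennreal (exp (l * (f x - measure_pmf.expectation p f))) \<partial>measure_pmf p)"
    by (rule nn_integral_eq_integral[symmetric])
       (auto intro!: integrable_measure_pmf_finite simp: set_p X)
  also have "\<dots> \<le> ennreal (exp (l\<^sup>2 * (b - a)\<^sup>2 / 8))"
    by (rule Hoeffdings_lemma_nn_integral) (use \<open>l > 0\<close> in simp)
  finally show ?thesis by (simp add: mean ennreal_le_iff)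
qed

lemma hoeffding_lemma_uniform:
  fixes f :: "'a \<Rightarrow> real"
  assumes X: "finite X" "X \<noteq> {}" and f: "\<And>x. x \<in> X \<Longrightarrow> a \<le> f x \<and> f x \<le> b"
  shows "(\<Sum>x\<in>X. exp (l * (f x - (\<Sum>y\<in>X. f y) / card X))) / card X \<le> exp (l\<^sup>2 * (b - a)\<^sup>2 / 8)"
proof (cases l "0::real" rule: linorder_cases)
  case less
  have "(\<Sum>x\<in>X. exp (- l * (- f x - (\<Sum>y\<in>X. - f y) / card X))) / card X
      \<le> exp ((- l)\<^sup>2 * (- a - - b)\<^sup>2 / 8)"
    by (rule hoeffding_lemma_uniform_pos) (use X f less in auto)
  then show ?thesis by (simp add: sum_negf algebra_simps)
next
  case equal
  then show ?thesis using X by simp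
next
  case greater
  with X f show ?thesis by (rule hoeffding_lemma_uniform_pos)
qed

lemma sets_Collect_hd_filter:
  assumes "\<And>x. x \<in> set xs \<Longrightarrow> {v \<in> space M. Q x v} \<in> sets M"
  shows "{v \<in> space M. hd (filter (\<lambda>x. Q x v) xs) = y} \<in> sets M"
  using assms
proof (induction xs)
  case Nil
  then show ?case by (cases "hd [] = y") auto
next
  case (Cons a xs)
  have "{v \<in> space M. hd (filter (\<lambda>x. Q x v) (a # xs)) = y} =
     ({v \<in> space M. Q a v} \<inter> {v \<in> space M. a = y}) \<union>
     ((space M - {v \<in> space M. Q a v}) \<inter> {v \<in> space M. hd (filter (\<lambda>x. Q x v) xs) = y})"
    by auto
  moreover have "{v \<in> space M. a = y} \<in> sets M" by (cases "a = y") auto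
  ultimately show ?case using Cons by auto
qed

section \<open>Histories and admissible statistics\<close>

text \<open>A history with arm sequence ss is history ss v for a reward vector v; measurability of a
  statistic of histories is measurability in v with respect to reward_space.\<close>
definition history :: "'s list \<Rightarrow> (nat \<Rightarrow> real) \<Rightarrow> ('s \<times> real) list" where
  "history ss v = zip ss (map v [0..<length ss])"

definition reward_sequence :: "('s \<times> real) list \<Rightarrow> nat \<Rightarrow> real" where
  "reward_sequence h j = (if j < length h then snd (h ! j) else 0)"

lemma history_reward_sequence: "history (map fst h) (reward_sequence h) = h"
  unfolding history_def reward_sequence_def by (rule nth_equalityI) auto

lemma map_fst_history [simp]: "map fst (history ss v) = ss"
  by (simp add: history_def)

lemma length_history [simp]: "length (history ss v) = length ss"
  by (simp add: history_def)

lemma nth_history: "j < length ss \<Longrightarrow> history ss v ! j = (ss ! j, v j)"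
  by (simp add: history_def)

lemma take_history: "take j (history ss v) = history (take j ss) v"
  unfolding history_def by (simp add: take_zip take_map min_def)

lemma history_snoc: "history ss v @ [(S, r)] = history (ss @ [S]) (v(length ss := r))"
  unfolding history_def by (rule nth_equalityI) (auto simp: nth_append)

definition reward_space :: "(nat \<Rightarrow> real) measure" where
  "reward_space = PiM UNIV (\<lambda>_. borel)"

lemma space_reward_space [simp]: "space reward_space = UNIV"
  by (simp add: reward_space_def space_PiM)

lemma measurable_reward_component [measurable]: "(\<lambda>v. v i) \<in> borel_measurable reward_space"
  unfolding reward_space_def by measurable

lemma measurable_into_reward_space:
  assumes "\<And>i. (\<lambda>x. f x i) \<in> borel_measurable M"
  shows "f \<in> measurable M reward_space"
  unfolding reward_space_def by (rule measurable_PiM_single') (auto simp: assms)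

lemma measurable_fun_upd_reward_space: "(\<lambda>r. w(k := r)) \<in> measurable borel reward_space"
proof (rule measurable_into_reward_space)
  show "(\<lambda>r. (w(k := r)) i) \<in> borel_measurable borel" for i
    by (cases "i = k") auto
qed

definition history_measurable :: "(('s \<times> real) list \<Rightarrow> real) \<Rightarrow> bool" where
  "history_measurable F \<longleftrightarrow> (\<forall>ss. (\<lambda>v. F (history ss v)) \<in> borel_measurable reward_space)"

definition bounded_by_length :: "(('s \<times> real) list \<Rightarrow> real) \<Rightarrow> bool" where
  "bounded_by_length F \<longleftrightarrow> (\<exists>B. \<forall>h. \<bar>F h\<bar> \<le> B (length h))"

definition admissible :: "(('s \<times> real) list \<Rightarrow> real) \<Rightarrow> bool" where
  "admissible F \<longleftrightarrow> history_measurable F \<and> bounded_by_length F"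

lemma history_measurable_snoc:
  assumes "history_measurable F"
  shows "(\<lambda>r. F (h @ [(S, r)])) \<in> borel_measurable borel"
proof -
  have "(\<lambda>r. F (h @ [(S, r)]))
      = (\<lambda>v. F (history (map fst h @ [S]) v)) \<circ> (\<lambda>r. (reward_sequence h)(length h := r))"
    using history_snoc[of "map fst h" "reward_sequence h" S] by (auto simp: history_reward_sequence)
  also have "\<dots> \<in> borel_measurable borel"
    using assms measurable_fun_upd_reward_space
    by (auto simp: history_measurable_def intro: measurable_comp)
  finally show ?thesis .
qed

lemma admissible_const: "admissible (\<lambda>_. c)"
  by (auto simp: admissible_def history_measurable_def bounded_by_length_def)

lemma admissible_add:
  assumes "admissible F" "admissible G"
  shows "admissible (\<lambda>h. F h + G h)"
proof -
  obtain B1 B2 where "\<And>h. \<bar>F h\<bar> \<le> B1 (length h)" "\<And>h. \<bar>G h\<bar> \<le> B2 (length h)"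
    using assms by (auto simp: admissible_def bounded_by_length_def)
  then have "\<bar>F h + G h\<bar> \<le> B1 (length h) + B2 (length h)" for h
    by (meson abs_triangle_ineq add_mono order.trans)
  then have "bounded_by_length (\<lambda>h. F h + G h)"
    unfolding bounded_by_length_def by (intro exI[of _ "\<lambda>n. B1 n + B2 n"]) simp
  moreover have "(\<lambda>v. F (history ss v) + G (history ss v)) \<in> borel_measurable reward_space" for ss
    using assms by (intro borel_measurable_add) (auto simp: admissible_def history_measurable_def)
  ultimately show ?thesis by (simp add: admissible_def history_measurable_def)
qed

lemma admissible_cmult:
  assumes "admissible F"
  shows "admissible (\<lambda>h. c * F h)"
proof -
  obtain B where "\<And>h. \<bar>F h\<bar> \<le> B (length h)"
    using assms by (auto simp: admissible_def bounded_by_length_def)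
  then have "\<bar>c * F h\<bar> \<le> \<bar>c\<bar> * B (length h)" for h
    by (simp add: abs_mult mult_left_mono)
  then have "bounded_by_length (\<lambda>h. c * F h)"
    unfolding bounded_by_length_def by (intro exI[of _ "\<lambda>n. \<bar>c\<bar> * B n"]) simp
  moreover have "(\<lambda>v. c * F (history ss v)) \<in> borel_measurable reward_space" for ss
    using assms by (intro borel_measurable_times) (auto simp: admissible_def history_measurable_def)
  ultimately show ?thesis by (simp add: admissible_def history_measurable_def)
qed

lemma admissible_sum:
  "finite I \<Longrightarrow> (\<And>i. i \<in> I \<Longrightarrow> admissible (F i)) \<Longrightarrow> admissible (\<lambda>h. \<Sum>i\<in>I. F i h)"
  by (induction I rule: finite_induct) (auto intro: admissible_add admissible_const)

section \<open>Expectations along a policy\<close>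

definition round_expectation :: "nat \<Rightarrow> (nat \<Rightarrow> (nat \<Rightarrow> nat) \<Rightarrow> real) \<Rightarrow> real measure
    \<Rightarrow> ('s \<Rightarrow> (nat \<Rightarrow> nat) set) \<Rightarrow> 's \<Rightarrow> (real \<Rightarrow> real) \<Rightarrow> real" where
  "round_expectation N Y noise pre S g =
     (\<Sum>A\<in>pre S. \<integral>eta. g ((\<Sum>i<N. Y i A + eta i) / real N) \<partial>(PiM {..<N} (\<lambda>_. noise)))
     / real (card (pre S))"

text \<open>run_expectation N Y noise pre pol m F h is the conditional expectation of F (H_(t+m))
  given H_t = h, where H is the history process generated by the policy pol.\<close>
primrec run_expectation :: "nat \<Rightarrow> (nat \<Rightarrow> (nat \<Rightarrow> nat) \<Rightarrow> real) \<Rightarrow> real measure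
    \<Rightarrow> ('s \<Rightarrow> (nat \<Rightarrow> nat) set) \<Rightarrow> (('s \<times> real) list \<Rightarrow> 's) \<Rightarrow> nat
    \<Rightarrow> (('s \<times> real) list \<Rightarrow> real) \<Rightarrow> ('s \<times> real) list \<Rightarrow> real" where
  "run_expectation N Y noise pre pol 0 F h = F h"
| "run_expectation N Y noise pre pol (Suc m) F h =
     round_expectation N Y noise pre (pol h)
       (\<lambda>r. run_expectation N Y noise pre pol m F (h @ [(pol h, r)]))"

lemma exp_reward_Suc_round_expectation:
  "exp_reward N Y noise pre pol (Suc m) h =
     round_expectation N Y noise pre (pol h) (\<lambda>r. r + exp_reward N Y noise pre pol m (h @ [(pol h, r)]))"
  by (simp add: round_expectation_def Let_def)

section \<open>Averaged sub-Gaussian noise\<close>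

locale averaged_noise =
  fixes N :: nat and noise :: "real measure"
  assumes N_pos: "1 \<le> N" and subgaussian: "subgaussian_noise noise"
begin

abbreviation Noise :: "(nat \<Rightarrow> real) measure" where
  "Noise \<equiv> PiM {..<N} (\<lambda>_. noise)"

definition noise_average :: "(nat \<Rightarrow> real) \<Rightarrow> real" where
  "noise_average \<eta> = (\<Sum>i<N. \<eta> i) / real N"

lemma prob_space_noise: "prob_space noise" and sets_noise: "sets noise = sets borel"
  using subgaussian by (auto simp: subgaussian_noise_def)

sublocale Noise: prob_space Noise
  by (rule prob_space_PiM) (simp add: prob_space_noise)

lemma measurable_Noise_eq: "measurable Noise M = measurable (PiM {..<N} (\<lambda>_. borel)) M"
  by (intro measurable_cong_sets sets_PiM_cong) (auto simp: sets_noise)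

lemma measurable_noise_component [measurable]: "i < N \<Longrightarrow> (\<lambda>\<eta>. \<eta> i) \<in> borel_measurable Noise"
  unfolding measurable_Noise_eq by measurable

lemma measurable_noise_average [measurable]: "noise_average \<in> borel_measurable Noise"
  unfolding measurable_Noise_eq noise_average_def by measurable

lemma noise_component_centered:
  assumes "i < N"
  shows "integrable Noise (\<lambda>\<eta>. \<eta> i)" and "(\<integral>\<eta>. \<eta> i \<partial>Noise) = 0"
proof -
  have distr: "distr Noise noise (\<lambda>\<eta>. \<eta> i) = noise"
    by (rule distr_PiM_component) (use assms prob_space_noise in auto)
  have comp: "(\<lambda>\<eta>. \<eta> i) \<in> measurable Noise noise"
    using assms by (intro measurable_component_singleton) auto
  have id: "(\<lambda>x. x) \<in> borel_measurable noise"
    by (simp add: measurable_cong_sets[OF sets_noise refl])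
  have "integrable noise (\<lambda>x. x)" "(\<integral>x. x \<partial>noise) = 0"
    using subgaussian by (auto simp: subgaussian_noise_def)
  then show "integrable Noise (\<lambda>\<eta>. \<eta> i)" "(\<integral>\<eta>. \<eta> i \<partial>Noise) = 0"
    using integrable_distr_eq[OF comp id] integral_distr[OF comp id] distr by auto
qed

lemma noise_average_centered:
  "integrable Noise noise_average" "(\<integral>\<eta>. noise_average \<eta> \<partial>Noise) = 0"
  using noise_component_centered unfolding noise_average_def
  by (auto intro!: Bochner_Integration.integrable_sum simp: Bochner_Integration.integral_sum)

lemma nn_integral_exp_noise_average_le:
  "(\<integral>\<^sup>+\<eta>. ennreal (exp (l * noise_average \<eta>)) \<partial>Noise) \<le> ennreal (exp (l\<^sup>2 / 2))"
proof -
  interpret product_sigma_finite "\<lambda>_::nat. noise"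
    unfolding product_sigma_finite_def using prob_space_noise prob_space_imp_sigma_finite by blast
  have mgf: "(\<integral>\<^sup>+x. ennreal (exp (s * x)) \<partial>noise) \<le> ennreal (exp (s\<^sup>2 / 2))" for s
    using subgaussian by (simp add: subgaussian_noise_def)
  have "ennreal (exp (l * noise_average \<eta>)) = (\<Prod>i<N. ennreal (exp (l / N * \<eta> i)))" for \<eta>
    by (simp add: noise_average_def sum_distrib_left sum_divide_distrib exp_sum prod_ennreal)
  then have "(\<integral>\<^sup>+\<eta>. ennreal (exp (l * noise_average \<eta>)) \<partial>Noise)
      = (\<Prod>i<N. \<integral>\<^sup>+x. ennreal (exp (l / N * x)) \<partial>noise)"
    by (simp only:) (rule product_nn_integral_prod, auto simp: measurable_cong_sets[OF sets_noise refl])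
  also have "\<dots> \<le> (\<Prod>i<N. ennreal (exp ((l / N)\<^sup>2 / 2)))"
    by (rule prod_mono_ennreal) (rule mgf)
  also have "\<dots> = ennreal (exp ((l / N)\<^sup>2 / 2) ^ N)"
    by (simp add: ennreal_power)
  also have "exp ((l / N)\<^sup>2 / 2) ^ N \<le> exp (l\<^sup>2 / 2)"
  proof -
    have "exp ((l / N)\<^sup>2 / 2) ^ N = exp (l\<^sup>2 / (2 * N))"
      using N_pos by (simp add: power2_eq_square field_simps flip: exp_of_nat_mult)
    also have "l\<^sup>2 / (2 * N) \<le> l\<^sup>2 / 2"
      using N_pos by (intro divide_left_mono) auto
    finally show ?thesis by simp
  qed
  finally show ?thesis by (simp add: ennreal_leI)
qed

end

section \<open>Pull counts and the UCB-TSN rule\<close>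

lemma n_pulls_snoc: "n_pulls (h @ [(S', r)]) S = n_pulls h S + (if S' = S then 1 else 0)"
  by (simp add: n_pulls_def)

lemma n_pulls_append: "n_pulls (h @ h') S = n_pulls h S + n_pulls h' S"
  by (simp add: n_pulls_def)

lemma n_pulls_le_length: "n_pulls h S \<le> length h"
  by (simp add: n_pulls_def)

lemma n_pulls_history: "n_pulls (history ss v) S = length (filter (\<lambda>x. x = S) ss)"
proof -
  have "n_pulls h S = length (filter (\<lambda>x. x = S) (map fst h))" for h
    by (simp add: n_pulls_def filter_map o_def)
  from this[of "history ss v"] show ?thesis by simp
qed

lemma sum_n_pulls_le_length:
  assumes "finite A"
  shows "(\<Sum>S\<in>A. n_pulls h S) \<le> length h"
proof (induction h)
  case Nil
  then show ?case by (simp add: n_pulls_def)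
next
  case (Cons p h)
  have "n_pulls (p # h) S = n_pulls h S + (if fst p = S then 1 else 0)" for S
    by (simp add: n_pulls_def)
  then have "(\<Sum>S\<in>A. n_pulls (p # h) S) = (\<Sum>S\<in>A. n_pulls h S) + (\<Sum>S\<in>A. if fst p = S then 1 else 0)"
    by (simp add: sum.distrib)
  also have "(\<Sum>S\<in>A. if fst p = S then 1 else 0) \<le> (1::nat)"
    using assms by (simp add: sum.delta)
  finally show ?case using Cons by simp
qed

definition reward_sum :: "'e history \<Rightarrow> (nat \<Rightarrow> 'e) \<Rightarrow> real" where
  "reward_sum h S = sum_list (map snd (filter (\<lambda>p. fst p = S) h))"

lemma reward_sum_snoc: "reward_sum (h @ [(S', r)]) S = reward_sum h S + (if S' = S then r else 0)"
  by (simp add: reward_sum_def)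

lemma R_hat_eq: "R_hat h S = reward_sum h S / real (n_pulls h S)"
  by (simp add: R_hat_def reward_sum_def)

lemma reward_sum_history:
  "reward_sum (history ss v) S = (\<Sum>j<length ss. if ss ! j = S then v j else 0)"
proof -
  have "reward_sum h S = (\<Sum>j<length h. if fst (h ! j) = S then snd (h ! j) else 0)" for h
    unfolding reward_sum_def
    by (subst sum_list_map_filter', subst sum_list_sum_nth) (simp add: atLeast0LessThan)
  then show ?thesis by (auto simp: nth_history intro!: sum.cong)
qed

lemma ucb_tsn_phase1:
  "Suc (length h) \<le> T1 \<Longrightarrow> ucb_tsn enum T1 \<delta> h = enum ! (length h mod length enum)"
  by (simp add: ucb_tsn_def Let_def)

lemma ucb_tsn_phase2:
  assumes "enum \<noteq> []" and "T1 < Suc (length h)"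
  shows "ucb_tsn enum T1 \<delta> h \<in> set enum"
    and "\<And>S. S \<in> set enum \<Longrightarrow> ucb_index \<delta> h S \<le> ucb_index \<delta> h (ucb_tsn enum T1 \<delta> h)"
proof -
  let ?maximal = "\<lambda>S. \<forall>S'\<in>set enum. ucb_index \<delta> h S' \<le> ucb_index \<delta> h S"
  have "Max (ucb_index \<delta> h ` set enum) \<in> ucb_index \<delta> h ` set enum"
    using assms(1) by (intro Max_in) auto
  then obtain S where "S \<in> set enum" "ucb_index \<delta> h S = Max (ucb_index \<delta> h ` set enum)"
    by auto
  then have "S \<in> set enum" "?maximal S" by (auto intro!: Max_ge)
  then have "filter ?maximal enum \<noteq> []" by (auto simp: filter_empty_conv)
  then have "hd (filter ?maximal enum) \<in> set (filter ?maximal enum)" by (rule hd_in_set)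
  moreover have "ucb_tsn enum T1 \<delta> h = hd (filter ?maximal enum)"
    using assms(2) by (simp add: ucb_tsn_def Let_def)
  ultimately show "ucb_tsn enum T1 \<delta> h \<in> set enum"
    and "\<And>S. S \<in> set enum \<Longrightarrow> ucb_index \<delta> h S \<le> ucb_index \<delta> h (ucb_tsn enum T1 \<delta> h)"
    by simp_all
qed

lemma ucb_tsn_in_set: "enum \<noteq> [] \<Longrightarrow> ucb_tsn enum T1 \<delta> h \<in> set enum"
  by (cases "Suc (length h) \<le> T1") (simp_all add: ucb_tsn_phase1 ucb_tsn_phase2(1))

lemma measurable_ucb_index_history:
  "(\<lambda>v. ucb_index \<delta> (history ss v) S) \<in> borel_measurable reward_space"
proof -
  have "(\<lambda>v. if ss ! j = S then v j else 0) \<in> borel_measurable reward_space" for j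
    by (cases "ss ! j = S") simp_all
  then have "(\<lambda>v. \<Sum>j<length ss. if ss ! j = S then v j else 0) \<in> borel_measurable reward_space"
    by (rule borel_measurable_sum)
  then show ?thesis
    unfolding ucb_index_def R_hat_eq reward_sum_history n_pulls_history
    by (intro borel_measurable_add borel_measurable_divide borel_measurable_const)
qed

lemma sets_ucb_tsn_history:
  "{v \<in> space reward_space. ucb_tsn enum T1 \<delta> (history ss v) = S} \<in> sets reward_space"
proof (cases "Suc (length ss) \<le> T1")
  case True
  then show ?thesis
    by (cases "enum ! (length ss mod length enum) = S")
       (simp_all add: ucb_tsn_phase1 sets.top[of reward_space, unfolded space_reward_space])
next
  case False
  have "{v \<in> space reward_space. \<forall>S'\<in>set enum.
      ucb_index \<delta> (history ss v) S' \<le> ucb_index \<delta> (history ss v) S''} \<in> sets reward_space"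
    if "S'' \<in> set enum" for S''
    by (intro sets.sets_Collect_finite_All borel_measurable_le measurable_ucb_index_history) simp
  from sets_Collect_hd_filter[OF this] show ?thesis
    using False by (simp add: ucb_tsn_def Let_def)
qed

section \<open>Exposure bandits\<close>

locale exposure_bandit = averaged_noise +
  fixes Y :: "nat \<Rightarrow> (nat \<Rightarrow> nat) \<Rightarrow> real" and pre :: "(nat \<Rightarrow> 'e) \<Rightarrow> (nat \<Rightarrow> nat) set"
    and pol :: "'e history \<Rightarrow> (nat \<Rightarrow> 'e)" and U :: "(nat \<Rightarrow> 'e) set"
  assumes finite_U: "finite U"
    and finite_pre: "\<And>S. S \<in> U \<Longrightarrow> finite (pre S)"
    and pre_nonempty: "\<And>S. S \<in> U \<Longrightarrow> pre S \<noteq> {}"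
    and Y_bounds: "\<And>S A i. S \<in> U \<Longrightarrow> A \<in> pre S \<Longrightarrow> i < N \<Longrightarrow> 0 \<le> Y i A \<and> Y i A \<le> 1"
    and pol_in_U: "\<And>h. pol h \<in> U"
    and pol_measurable: "\<And>ss S. {v \<in> space reward_space. pol (history ss v) = S} \<in> sets reward_space"
begin

abbreviation E1 :: "(nat \<Rightarrow> 'e) \<Rightarrow> (real \<Rightarrow> real) \<Rightarrow> real" where
  "E1 \<equiv> round_expectation N Y noise pre"

abbreviation E :: "nat \<Rightarrow> ('e history \<Rightarrow> real) \<Rightarrow> 'e history \<Rightarrow> real" where
  "E \<equiv> run_expectation N Y noise pre pol"

definition unit_mean :: "(nat \<Rightarrow> nat) \<Rightarrow> real" where
  "unit_mean A = (\<Sum>i<N. Y i A) / real N"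

definition observed_reward :: "(nat \<Rightarrow> nat) \<Rightarrow> (nat \<Rightarrow> real) \<Rightarrow> real" where
  "observed_reward A \<eta> = unit_mean A + noise_average \<eta>"

definition mean_reward :: "(nat \<Rightarrow> 'e) \<Rightarrow> real" where
  "mean_reward S = (if S \<in> U then (\<Sum>A\<in>pre S. unit_mean A) / real (card (pre S)) else 0)"

lemma unit_mean_bounds:
  assumes "S \<in> U" "A \<in> pre S"
  shows "0 \<le> unit_mean A \<and> unit_mean A \<le> 1"
proof -
  have "0 \<le> (\<Sum>i<N. Y i A)" "(\<Sum>i<N. Y i A) \<le> (\<Sum>i<N. 1)"
    using Y_bounds[OF assms] by (fastforce intro: sum_nonneg, intro sum_mono, fastforce)
  then show ?thesis using N_pos by (simp add: unit_mean_def)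
qed

lemma mean_reward_bounds: "0 \<le> mean_reward S \<and> mean_reward S \<le> 1"
proof (cases "S \<in> U")
  case True
  have "0 \<le> (\<Sum>A\<in>pre S. unit_mean A)" "(\<Sum>A\<in>pre S. unit_mean A) \<le> (\<Sum>A\<in>pre S. 1)"
    using unit_mean_bounds[OF True] by (fastforce intro: sum_nonneg, intro sum_mono, fastforce)
  then show ?thesis
    using True finite_pre[OF True] pre_nonempty[OF True]
    by (simp add: mean_reward_def divide_le_eq card_gt_0_iff)
qed (simp add: mean_reward_def)

lemma round_expectation_eq:
  "E1 S g = (\<Sum>A\<in>pre S. \<integral>\<eta>. g (observed_reward A \<eta>) \<partial>Noise) / real (card (pre S))"
  by (simp add: round_expectation_def observed_reward_def unit_mean_def noise_average_def
      sum.distrib add_divide_distrib)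

lemma measurable_observed_reward [measurable]: "observed_reward A \<in> borel_measurable Noise"
  unfolding observed_reward_def by measurable

lemma integrable_bounded_observed:
  fixes g :: "real \<Rightarrow> real"
  assumes "g \<in> borel_measurable borel" "\<And>r. \<bar>g r\<bar> \<le> B"
  shows "integrable Noise (\<lambda>\<eta>. g (observed_reward A \<eta>))"
  by (rule Noise.integrable_const_bound[where B = B]) (use assms in auto)

lemma round_expectation_const: "S \<in> U \<Longrightarrow> E1 S (\<lambda>_. c) = c"
  using finite_pre[of S] pre_nonempty[of S] by (simp add: round_expectation_eq Noise.prob_space)

lemma round_expectation_cmult: "E1 S (\<lambda>r. c * g r) = c * E1 S g"
  by (simp add: round_expectation_eq sum_distrib_left)

lemma round_expectation_add:
  assumes "\<And>A. integrable Noise (\<lambda>\<eta>. g1 (observed_reward A \<eta>))"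
    and "\<And>A. integrable Noise (\<lambda>\<eta>. g2 (observed_reward A \<eta>))"
  shows "E1 S (\<lambda>r. g1 r + g2 r) = E1 S g1 + E1 S g2"
  using assms by (simp add: round_expectation_eq sum.distrib add_divide_distrib)

lemma round_expectation_mono:
  assumes "\<And>A. integrable Noise (\<lambda>\<eta>. g1 (observed_reward A \<eta>))"
    and "\<And>A. integrable Noise (\<lambda>\<eta>. g2 (observed_reward A \<eta>))"
    and "\<And>r. g1 r \<le> g2 r"
  shows "E1 S g1 \<le> E1 S g2"
  unfolding round_expectation_eq
  by (intro divide_right_mono sum_mono integral_mono) (use assms in auto)

lemma round_expectation_abs_le:
  assumes "S \<in> U" "g \<in> borel_measurable borel" "\<And>r. \<bar>g r\<bar> \<le> B"
  shows "\<bar>E1 S g\<bar> \<le> B"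
proof -
  have int: "integrable Noise (\<lambda>\<eta>. g (observed_reward A \<eta>))" for A
    using assms(2,3) by (rule integrable_bounded_observed)
  have "- B \<le> g r" "g r \<le> B" for r
    using assms(3)[of r] by linarith+
  then have "E1 S (\<lambda>_. - B) \<le> E1 S g" "E1 S g \<le> E1 S (\<lambda>_. B)"
    using int by (auto intro!: round_expectation_mono)
  then show ?thesis
    using round_expectation_const[OF assms(1)] by (simp add: abs_le_iff)
qed

lemma round_expectation_id: "S \<in> U \<Longrightarrow> E1 S (\<lambda>r. r) = mean_reward S"
  using noise_average_centered
  by (simp add: round_expectation_eq observed_reward_def mean_reward_def Noise.prob_space)

lemma borel_measurable_round_expectation_upd:
  assumes G: "G \<in> borel_measurable reward_space"
  shows "(\<lambda>v. E1 S (\<lambda>r. G (v(k := r)))) \<in> borel_measurable reward_space"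
proof -
  have upd: "(\<lambda>p. (fst p)(k := observed_reward A (snd p))) \<in> measurable (reward_space \<Otimes>\<^sub>M Noise) reward_space"
    for A
  proof (rule measurable_into_reward_space)
    show "(\<lambda>p. ((fst p)(k := observed_reward A (snd p))) i) \<in> borel_measurable (reward_space \<Otimes>\<^sub>M Noise)"
      for i by (cases "i = k") auto
  qed
  have "(\<lambda>v. \<integral>\<eta>. G (v(k := observed_reward A \<eta>)) \<partial>Noise) \<in> borel_measurable reward_space" for A
  proof (rule Noise.borel_measurable_lebesgue_integral)
    have "(\<lambda>(v, \<eta>). G (v(k := observed_reward A \<eta>))) = G \<circ> (\<lambda>p. (fst p)(k := observed_reward A (snd p)))"
      by (auto simp: fun_eq_iff)
    then show "(\<lambda>(v, \<eta>). G (v(k := observed_reward A \<eta>))) \<in> borel_measurable (reward_space \<Otimes>\<^sub>M Noise)"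
      using measurable_comp[OF upd G] by simp
  qed
  then show ?thesis unfolding round_expectation_eq by measurable
qed

lemma integrable_admissible_snoc:
  assumes "admissible F"
  shows "integrable Noise (\<lambda>\<eta>. F (h @ [(S, observed_reward A \<eta>)]))"
proof -
  obtain B where B: "\<And>h. \<bar>F h\<bar> \<le> B (length h)"
    using assms by (auto simp: admissible_def bounded_by_length_def)
  have "\<bar>F (h @ [(S, r)])\<bar> \<le> B (Suc (length h))" for r
    using B[of "h @ [(S, r)]"] by simp
  then show ?thesis
    using assms history_measurable_snoc
    by (intro integrable_bounded_observed[where g = "\<lambda>r. F (h @ [(S, r)])"]) (auto simp: admissible_def)
qed

lemma run_expectation_0 [simp]: "E 0 F = F"
  by (simp add: fun_eq_iff)

lemma history_measurable_run_expectation_Suc: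
  assumes "history_measurable (E m F)"
  shows "history_measurable (E (Suc m) F)"
  unfolding history_measurable_def
proof
  fix ss
  have "(\<lambda>v. E (Suc m) F (history ss v)) = (\<lambda>v. \<Sum>S\<in>U. if pol (history ss v) = S
      then E1 S (\<lambda>r. E m F (history (ss @ [S]) (v(length ss := r)))) else 0)"
    using finite_U pol_in_U by (simp add: sum.delta history_snoc)
  moreover have "(\<lambda>v. E1 S (\<lambda>r. E m F (history (ss @ [S]) (v(length ss := r)))))
      \<in> borel_measurable reward_space" for S
    using assms unfolding history_measurable_def by (intro borel_measurable_round_expectation_upd) simp
  ultimately show "(\<lambda>v. E (Suc m) F (history ss v)) \<in> borel_measurable reward_space"
    by (simp only:) (intro borel_measurable_sum measurable_If pol_measurable borel_measurable_const)
qed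

lemma admissible_run_expectation: "admissible F \<Longrightarrow> admissible (E m F)"
proof (induction m)
  case (Suc m)
  then obtain B where B: "\<And>h. \<bar>E m F h\<bar> \<le> B (length h)"
    by (auto simp: admissible_def bounded_by_length_def)
  have "\<bar>E m F (h @ [(pol h, r)])\<bar> \<le> B (Suc (length h))" for h r
    using B[of "h @ [(pol h, r)]"] by simp
  then have "\<bar>E (Suc m) F h\<bar> \<le> B (Suc (length h))" for h
    using Suc history_measurable_snoc
    by (auto intro!: round_expectation_abs_le pol_in_U simp: admissible_def)
  then have "bounded_by_length (E (Suc m) F)"
    unfolding bounded_by_length_def by (intro exI[of _ "\<lambda>n. B (Suc n)"]) simp
  with Suc show ?case
    unfolding admissible_def using history_measurable_run_expectation_Suc by blast
qed simp

lemma run_expectation_const: "E m (\<lambda>_. c) h = c"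
  by (induction m arbitrary: h) (simp_all add: round_expectation_const pol_in_U)

lemma run_expectation_cmult: "E m (\<lambda>h. c * F h) h = c * E m F h"
  by (induction m arbitrary: h) (simp_all add: round_expectation_cmult[symmetric])

lemma run_expectation_add:
  "admissible F \<Longrightarrow> admissible G \<Longrightarrow> E m (\<lambda>h. F h + G h) h = E m F h + E m G h"
  by (induction m arbitrary: h)
     (simp_all, intro round_expectation_add integrable_admissible_snoc admissible_run_expectation)

lemma run_expectation_sum:
  "finite I \<Longrightarrow> (\<And>i. i \<in> I \<Longrightarrow> admissible (F i)) \<Longrightarrow>
    E m (\<lambda>h. \<Sum>i\<in>I. F i h) h = (\<Sum>i\<in>I. E m (F i) h)"
  by (induction I rule: finite_induct) (simp_all add: run_expectation_const run_expectation_add admissible_sum)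

definition reachable :: "'e history \<Rightarrow> 'e history \<Rightarrow> bool" where
  "reachable h h' \<longleftrightarrow> (\<exists>ext. h' = h @ ext \<and> (\<forall>j<length ext. fst (ext ! j) = pol (h @ take j ext)))"

lemma reachable_snoc: "reachable (h @ [(pol h, r)]) h' \<Longrightarrow> reachable h h'"
  unfolding reachable_def
proof (elim exE conjE)
  fix ext
  assume ext: "h' = (h @ [(pol h, r)]) @ ext"
    "\<forall>j<length ext. fst (ext ! j) = pol ((h @ [(pol h, r)]) @ take j ext)"
  show "\<exists>ext. h' = h @ ext \<and> (\<forall>j<length ext. fst (ext ! j) = pol (h @ take j ext))"
  proof (intro exI[of _ "(pol h, r) # ext"] conjI allI impI)
    show "fst (((pol h, r) # ext) ! j) = pol (h @ take j ((pol h, r) # ext))"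
      if "j < length ((pol h, r) # ext)" for j
      using ext(2) that by (cases j) auto
  qed (use ext in auto)
qed

lemma reachable_nth: "reachable [] h \<Longrightarrow> j < length h \<Longrightarrow> fst (h ! j) = pol (take j h)"
  by (auto simp: reachable_def)

lemma run_expectation_mono:
  assumes "admissible F" "admissible G"
    and "\<And>h'. reachable h h' \<Longrightarrow> length h' = length h + m \<Longrightarrow> F h' \<le> G h'"
  shows "E m F h \<le> E m G h"
  using assms(3)
proof (induction m arbitrary: h)
  case 0
  then show ?case by (simp add: reachable_def)
next
  case (Suc m)
  have "E m F (h @ [(pol h, r)]) \<le> E m G (h @ [(pol h, r)])" for r
  proof (rule Suc.IH)
    fix h'
    assume "reachable (h @ [(pol h, r)]) h'" "length h' = length (h @ [(pol h, r)]) + m"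
    then show "F h' \<le> G h'"
      using Suc.prems reachable_snoc[of h r h'] by simp
  qed
  then show ?case
    using assms(1,2)
    by (simp, intro round_expectation_mono integrable_admissible_snoc admissible_run_expectation)
qed

definition cumulative_mean :: "'e history \<Rightarrow> real" where
  "cumulative_mean h = (\<Sum>j<length h. mean_reward (fst (h ! j)))"

lemma cumulative_mean_snoc: "cumulative_mean (h @ [(S, r)]) = cumulative_mean h + mean_reward S"
  by (simp add: cumulative_mean_def nth_append)

lemma admissible_cumulative_mean: "admissible cumulative_mean"
proof -
  have "\<bar>cumulative_mean h\<bar> \<le> real (length h)" for h
  proof -
    have "0 \<le> cumulative_mean h" "cumulative_mean h \<le> (\<Sum>j<length h. 1)"
      unfolding cumulative_mean_def using mean_reward_bounds
      by (fastforce intro: sum_nonneg, intro sum_mono, fastforce)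
    then show ?thesis by simp
  qed
  moreover have "(\<lambda>v. cumulative_mean (history ss v)) = (\<lambda>v. \<Sum>j<length ss. mean_reward (ss ! j))" for ss
    by (auto simp: cumulative_mean_def nth_history intro!: sum.cong)
  ultimately show ?thesis
    unfolding admissible_def history_measurable_def bounded_by_length_def by auto
qed

lemma exp_reward_eq_run_expectation_diff:
  "exp_reward N Y noise pre pol m h = E m cumulative_mean h - cumulative_mean h"
proof (induction m arbitrary: h)
  case (Suc m)
  define S where "S = pol h"
  have S: "S \<in> U" by (simp add: S_def pol_in_U)
  have int: "integrable Noise (\<lambda>\<eta>. E m cumulative_mean (h @ [(S, observed_reward A \<eta>)]))" for A
    by (intro integrable_admissible_snoc admissible_run_expectation admissible_cumulative_mean)
  have int_id: "integrable Noise (\<lambda>\<eta>. observed_reward A \<eta>)" for A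
    using noise_average_centered by (simp add: observed_reward_def)
  have "exp_reward N Y noise pre pol (Suc m) h
      = E1 S (\<lambda>r. r + exp_reward N Y noise pre pol m (h @ [(S, r)]))"
    unfolding S_def by (rule exp_reward_Suc_round_expectation)
  also have "\<dots> = E1 S (\<lambda>r. r + (E m cumulative_mean (h @ [(S, r)])
      + (- (cumulative_mean h + mean_reward S))))"
    by (simp add: Suc.IH cumulative_mean_snoc algebra_simps)
  also have "\<dots> = E1 S (\<lambda>r. r) + (E1 S (\<lambda>r. E m cumulative_mean (h @ [(S, r)]))
      + E1 S (\<lambda>_. - (cumulative_mean h + mean_reward S)))"
    using int int_id by (simp add: round_expectation_add)
  finally show ?case
    using S by (simp add: round_expectation_id round_expectation_const S_def)
qed simp

lemma exp_reward_eq_run_expectation: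
  "exp_reward N Y noise pre pol m [] = E m cumulative_mean []"
  using exp_reward_eq_run_expectation_diff[of m "[]"] by (simp add: cumulative_mean_def)
section \<open>Exponential supermartingales\<close>

lemma unit_mean_hoeffding:
  assumes "S \<in> U"
  shows "(\<Sum>A\<in>pre S. exp (l * (unit_mean A - mean_reward S))) / real (card (pre S)) \<le> exp (l\<^sup>2 / 8)"
  using hoeffding_lemma_uniform[OF finite_pre[OF assms] pre_nonempty[OF assms],
      where f = unit_mean and a = 0 and b = 1 and l = l]
    unit_mean_bounds[OF assms]
  by (simp add: mean_reward_def assms)

lemma integral_truncated_exp_observed_le:
  assumes "0 \<le> a" "0 \<le> c"
  shows "(\<integral>\<eta>. min c (a * exp (l * (observed_reward A \<eta> - x))) \<partial>Noise)
    \<le> a * exp (l * (unit_mean A - x)) * exp (l\<^sup>2 / 2)"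
proof -
  define K where "K = a * exp (l * (unit_mean A - x))"
  have "0 \<le> K" using assms by (simp add: K_def)
  have bound: "min c (a * exp (l * (observed_reward A \<eta> - x))) \<le> K * exp (l * noise_average \<eta>)" for \<eta>
    by (simp add: K_def observed_reward_def algebra_simps flip: exp_add)
  have "integrable Noise (\<lambda>\<eta>. min c (a * exp (l * (observed_reward A \<eta> - x))))"
    using assms by (intro integrable_bounded_observed[where B = c]) auto
  then have "ennreal (\<integral>\<eta>. min c (a * exp (l * (observed_reward A \<eta> - x))) \<partial>Noise)
      = (\<integral>\<^sup>+\<eta>. ennreal (min c (a * exp (l * (observed_reward A \<eta> - x)))) \<partial>Noise)"
    using assms by (intro nn_integral_eq_integral[symmetric]) auto
  also have "\<dots> \<le> (\<integral>\<^sup>+\<eta>. ennreal K * ennreal (exp (l * noise_average \<eta>)) \<partial>Noise)"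
    using bound \<open>0 \<le> K\<close> by (intro nn_integral_mono) (simp add: ennreal_leI flip: ennreal_mult')
  also have "\<dots> = ennreal K * (\<integral>\<^sup>+\<eta>. ennreal (exp (l * noise_average \<eta>)) \<partial>Noise)"
    by (rule nn_integral_cmult) measurable
  also have "\<dots> \<le> ennreal K * ennreal (exp (l\<^sup>2 / 2))"
    by (intro mult_left_mono nn_integral_exp_noise_average_le) simp
  finally show ?thesis
    using \<open>0 \<le> K\<close> by (simp add: K_def ennreal_le_iff flip: ennreal_mult)
qed

lemma round_expectation_truncated_exp_le:
  assumes "S \<in> U" "0 \<le> a" "0 \<le> c"
  shows "E1 S (\<lambda>r. min c (a * exp (l * (r - mean_reward S)))) \<le> a * exp (5 / 8 * l\<^sup>2)"
proof -
  have "E1 S (\<lambda>r. min c (a * exp (l * (r - mean_reward S))))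
      \<le> (\<Sum>A\<in>pre S. a * exp (l * (unit_mean A - mean_reward S)) * exp (l\<^sup>2 / 2)) / real (card (pre S))"
    unfolding round_expectation_eq
    by (intro divide_right_mono sum_mono integral_truncated_exp_observed_le assms) simp
  also have "\<dots> = a * exp (l\<^sup>2 / 2)
      * ((\<Sum>A\<in>pre S. exp (l * (unit_mean A - mean_reward S))) / real (card (pre S)))"
    by (simp add: sum_distrib_left sum_distrib_right mult_ac)
  also have "\<dots> \<le> a * exp (l\<^sup>2 / 2) * exp (l\<^sup>2 / 8)"
    using assms by (intro mult_left_mono unit_mean_hoeffding) auto
  also have "\<dots> = a * exp (5 / 8 * l\<^sup>2)"
  proof -
    have "5 / 8 * l\<^sup>2 = l\<^sup>2 / 2 + l\<^sup>2 / 8" by simp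
    then show ?thesis by (simp only: exp_add mult.assoc)
  qed
  finally show ?thesis .
qed

definition centered_sum :: "(nat \<Rightarrow> 'e) \<Rightarrow> nat \<Rightarrow> 'e history \<Rightarrow> real" where
  "centered_sum S n h = (\<Sum>j<length h.
     if fst (h ! j) = S \<and> n_pulls (take j h) S < n then snd (h ! j) - mean_reward S else 0)"

text \<open>Only the first n pulls of S enter the centred sum, so the process stops moving once S
  has been pulled n times. The constant 5/8 = 1/2 + 1/8 combines the 1-sub-Gaussian noise average
  with Hoeffding's bound for the uniformly drawn super arm.\<close>
definition exp_martingale :: "(nat \<Rightarrow> 'e) \<Rightarrow> nat \<Rightarrow> real \<Rightarrow> 'e history \<Rightarrow> real" where
  "exp_martingale S n l h = exp (l * centered_sum S n h - 5 / 8 * l\<^sup>2 * real (min n (n_pulls h S)))"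

lemma centered_sum_snoc:
  "centered_sum S n (h @ [(S', r)]) =
     centered_sum S n h + (if S' = S \<and> n_pulls h S < n then r - mean_reward S else 0)"
proof -
  have "(\<Sum>j<length h. if fst ((h @ [(S', r)]) ! j) = S \<and> n_pulls (take j (h @ [(S', r)])) S < n
        then snd ((h @ [(S', r)]) ! j) - mean_reward S else 0) = centered_sum S n h"
    unfolding centered_sum_def by (rule sum.cong) (auto simp: nth_append)
  then show ?thesis by (simp add: centered_sum_def)
qed

lemma exp_martingale_snoc:
  "exp_martingale S n l (h @ [(S', r)]) =
     (if S' = S \<and> n_pulls h S < n
      then exp_martingale S n l h * exp (l * (r - mean_reward S) - 5 / 8 * l\<^sup>2)
      else exp_martingale S n l h)"
proof (cases "S' = S \<and> n_pulls h S < n")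
  case True
  then have "real (min n (n_pulls (h @ [(S', r)]) S)) = real (min n (n_pulls h S)) + 1"
    by (auto simp: n_pulls_snoc)
  with True show ?thesis
    by (simp add: exp_martingale_def centered_sum_snoc algebra_simps flip: exp_add)
next
  case False
  then have "min n (n_pulls (h @ [(S', r)]) S) = min n (n_pulls h S)"
    by (auto simp: n_pulls_snoc)
  with False show ?thesis
    unfolding exp_martingale_def centered_sum_snoc by auto
qed

lemma exp_martingale_Nil: "exp_martingale S n l [] = 1"
  by (simp add: exp_martingale_def centered_sum_def n_pulls_def)

lemma centered_sum_eq_reward_sum:
  "n_pulls h S \<le> n \<Longrightarrow> centered_sum S n h = reward_sum h S - real (n_pulls h S) * mean_reward S"
proof (induction h rule: rev_induct)
  case Nil
  then show ?case by (simp add: centered_sum_def reward_sum_def n_pulls_def)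
next
  case (snoc p h)
  obtain S' r where p: "p = (S', r)" by (cases p)
  have "n_pulls h S \<le> n" "S' = S \<Longrightarrow> n_pulls h S < n"
    using snoc.prems by (auto simp: p n_pulls_snoc)
  with snoc.IH show ?case
    by (cases "S' = S") (auto simp: p centered_sum_snoc reward_sum_snoc n_pulls_snoc algebra_simps)
qed

lemma centered_sum_append:
  "n \<le> n_pulls h S \<Longrightarrow> centered_sum S n (h @ h') = centered_sum S n h"
proof (induction h' rule: rev_induct)
  case (snoc p h')
  obtain S' r where p: "p = (S', r)" by (cases p)
  have "n \<le> n_pulls (h @ h') S" using snoc.prems by (simp add: n_pulls_append)
  with snoc show ?case
    using centered_sum_snoc[of S n "h @ h'" S' r] by (simp add: p)
qed simp

lemma admissible_truncated_exp_martingale: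
  assumes "0 \<le> c"
  shows "admissible (\<lambda>h. min c (exp_martingale S n l h))"
proof -
  have "(\<lambda>v. min c (exp_martingale S n l (history ss v)))
      = (\<lambda>v. min c (exp (l * (\<Sum>j<length ss.
          if ss ! j = S \<and> length (filter (\<lambda>x. x = S) (take j ss)) < n then v j - mean_reward S else 0)
          - 5 / 8 * l\<^sup>2 * real (min n (length (filter (\<lambda>x. x = S) ss))))))" for ss
    by (auto simp: exp_martingale_def centered_sum_def nth_history take_history n_pulls_history
        intro!: ext arg_cong[where f = "\<lambda>x. min c (exp x)"] sum.cong)
  then have "history_measurable (\<lambda>h. min c (exp_martingale S n l h))"
    unfolding history_measurable_def by simp
  moreover have "\<bar>min c (exp_martingale S n l h)\<bar> \<le> c" for h
    using assms by (simp add: exp_martingale_def)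
  ultimately show ?thesis
    unfolding admissible_def bounded_by_length_def by (intro conjI exI[of _ "\<lambda>_. c"]) auto
qed

lemma round_expectation_truncated_exp_martingale_le:
  assumes "S \<in> U" "0 \<le> c"
  shows "E1 (pol h) (\<lambda>r. min c (exp_martingale S n l (h @ [(pol h, r)]))) \<le> exp_martingale S n l h"
proof (cases "pol h = S \<and> n_pulls h S < n")
  case True
  define a where "a = exp_martingale S n l h * exp (- (5 / 8 * l\<^sup>2))"
  have "exp_martingale S n l (h @ [(pol h, r)]) = a * exp (l * (r - mean_reward S))" for r
    using True by (simp add: exp_martingale_snoc a_def mult.assoc flip: exp_add)
  then have "E1 (pol h) (\<lambda>r. min c (exp_martingale S n l (h @ [(pol h, r)])))
      = E1 S (\<lambda>r. min c (a * exp (l * (r - mean_reward S))))"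
    using True by simp
  also have "\<dots> \<le> a * exp (5 / 8 * l\<^sup>2)"
    using assms by (intro round_expectation_truncated_exp_le) (auto simp: a_def exp_martingale_def)
  also have "\<dots> = exp_martingale S n l h"
    by (simp add: a_def mult.assoc flip: exp_add)
  finally show ?thesis .
next
  case False
  then have "exp_martingale S n l (h @ [(pol h, r)]) = exp_martingale S n l h" for r
    by (auto simp: exp_martingale_snoc)
  then show ?thesis by (simp add: round_expectation_const pol_in_U)
qed

text \<open>The cap c only serves to make the process bounded, hence admissible.\<close>
lemma run_expectation_truncated_exp_martingale_le:
  assumes "S \<in> U" "0 \<le> c"
  shows "E m (\<lambda>h. min c (exp_martingale S n l h)) h \<le> exp_martingale S n l h"
proof (induction m arbitrary: h)
  case (Suc m)
  let ?G = "\<lambda>h. min c (exp_martingale S n l h)"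
  have adm: "admissible ?G"
    using assms(2) by (rule admissible_truncated_exp_martingale)
  have "E m ?G h' \<le> E m (\<lambda>_. c) h'" for h'
    using adm admissible_const by (rule run_expectation_mono) simp
  with Suc.IH have "E m ?G h' \<le> ?G h'" for h'
    by (simp add: run_expectation_const)
  then have "E (Suc m) ?G h \<le> E1 (pol h) (\<lambda>r. ?G (h @ [(pol h, r)]))"
    using adm
    by (simp, intro round_expectation_mono integrable_admissible_snoc admissible_run_expectation)
  also have "\<dots> \<le> exp_martingale S n l h"
    using assms by (rule round_expectation_truncated_exp_martingale_le)
  finally show ?case .
qed simp

end

section \<open>Regret of UCB-TSN\<close>

locale ucb_tsn_run = exposure_bandit N noise Y pre "ucb_tsn enum T1 (1 / (real T)\<^sup>2)" "set enum"
  for N noise Y pre and enum :: "(nat \<Rightarrow> 'e) list" and T1 T :: nat +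
  assumes two_le_card: "2 \<le> card (set enum)" and length_enum_le_T1: "length enum \<le> T1"
    and T1_le_T: "T1 \<le> T"
begin

abbreviation ucb :: "'e history \<Rightarrow> (nat \<Rightarrow> 'e)" where
  "ucb \<equiv> ucb_tsn enum T1 (1 / (real T)\<^sup>2)"

text \<open>L is ln (1 / delta) for the confidence parameter delta = 1 / T^2.\<close>
definition L :: real where
  "L = ln ((real T)\<^sup>2)"

definition width :: "nat \<Rightarrow> real" where
  "width n = sqrt (9 * L / real n)"

text \<open>The tilt 4/5 * width n maximises l * n * width n - 5/8 * l^2 * n over l; the maximum
  is 18/5 * L, which is where the cap comes from.\<close>
definition tilt :: "nat \<Rightarrow> real" where
  "tilt n = 4 / 5 * width n"

definition cap :: real where
  "cap = exp (18 / 5 * L)"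

definition best_mean :: real where
  "best_mean = Max (mean_reward ` set enum)"

definition potential :: "'e history \<Rightarrow> real" where
  "potential h = (\<Sum>S\<in>set enum. sqrt (real (n_pulls h S)))"

text \<open>A confidence-interval violation of S after n pulls drives one of the two tilted
  martingales of (S, n) to at least cap, so this weight is at least 1 on the bad event, while by
  the supermartingale property its expectation is at most 2 |U_E| T / cap.\<close>
definition bad_event_weight :: "'e history \<Rightarrow> real" where
  "bad_event_weight h = (\<Sum>S\<in>set enum. \<Sum>n\<in>{1..T}.
     (min cap (exp_martingale S n (tilt n) h) + min cap (exp_martingale S n (- tilt n) h)) / cap)"

lemma enum_nonempty: "enum \<noteq> []"
  using two_le_card by auto

lemma card_le_T1: "card (set enum) \<le> T1"
  using card_length[of enum] length_enum_le_T1 by linarith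

lemma two_le_T: "2 \<le> T"
  using two_le_card card_le_T1 T1_le_T by linarith

lemma L_eq: "L = 2 * ln (real T)"
  using two_le_T by (simp add: L_def ln_realpow)

lemma L_pos: "0 < L"
  using two_le_T by (simp add: L_eq)

lemma cap_pos: "0 < cap"
  by (simp add: cap_def)

lemma ucb_index_eq: "ucb_index (1 / (real T)\<^sup>2) h S = R_hat h S + width (n_pulls h S)"
  by (simp add: ucb_index_def width_def L_def)

lemma width_nonneg: "0 \<le> width n"
  using L_pos by (simp add: width_def)

lemma width_eq: "width n = 3 * sqrt L / sqrt (real n)"
proof -
  have "sqrt 9 = (3::real)" by (rule real_sqrt_unique) auto
  then show ?thesis by (simp add: width_def real_sqrt_divide real_sqrt_mult)
qed

lemma width_squared: "1 \<le> n \<Longrightarrow> real n * (width n)\<^sup>2 = 9 * L"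
  using L_pos by (simp add: width_def less_imp_le)

lemma width_le_sqrt_increment:
  assumes "1 \<le> n"
  shows "width n \<le> 9 * sqrt L * (sqrt (real n + 1) - sqrt (real n))"
proof -
  have "width n = 3 * sqrt L * (1 / sqrt (real n))" by (simp add: width_eq)
  also have "\<dots> \<le> 3 * sqrt L * (3 * (sqrt (real n + 1) - sqrt (real n)))"
    using assms L_pos by (intro mult_left_mono inverse_sqrt_le_sqrt_increment) auto
  finally show ?thesis by (simp add: algebra_simps)
qed

lemma best_mean_in: "best_mean \<in> mean_reward ` set enum"
  using enum_nonempty by (simp add: best_mean_def)

lemma best_mean_le_1: "best_mean \<le> 1"
  using best_mean_in mean_reward_bounds by auto

lemma bad_event_weight_nonneg: "0 \<le> bad_event_weight h"
  unfolding bad_event_weight_def using cap_pos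
  by (intro sum_nonneg divide_nonneg_pos add_nonneg_nonneg) (auto simp: exp_martingale_def)

lemma cap_le_exp_martingale:
  assumes n: "1 \<le> n" "n_pulls h S = n" and l: "l\<^sup>2 = (tilt n)\<^sup>2"
    and dev: "4 / 5 * real n * (width n)\<^sup>2 \<le> l * (reward_sum h S - real n * mean_reward S)"
  shows "cap \<le> exp_martingale S n l (h @ h')"
proof -
  define X where "X = reward_sum h S - real n * mean_reward S"
  have "l * centered_sum S n (h @ h') - 5 / 8 * l\<^sup>2 * real (min n (n_pulls (h @ h') S))
      = l * X - 5 / 8 * (real n * l\<^sup>2)"
    using n by (simp add: X_def centered_sum_append centered_sum_eq_reward_sum n_pulls_append)
  moreover have "real n * l\<^sup>2 = 16 / 25 * (real n * (width n)\<^sup>2)"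
    unfolding l tilt_def by (simp add: power2_eq_square)
  moreover have "real n * (width n)\<^sup>2 = 9 * L"
    using n(1) by (rule width_squared)
  ultimately have "18 / 5 * L \<le> l * centered_sum S n (h @ h') - 5 / 8 * l\<^sup>2 * real (min n (n_pulls (h @ h') S))"
    using dev by (simp add: X_def)
  then show ?thesis by (simp add: cap_def exp_martingale_def)
qed

lemma confidence_violation_exp_martingale_ge_cap:
  assumes n: "1 \<le> n_pulls h S"
    and violation: "width (n_pulls h S) < \<bar>R_hat h S - mean_reward S\<bar>"
  defines "n \<equiv> n_pulls h S"
  shows "cap \<le> exp_martingale S n (tilt n) (h @ h') \<or> cap \<le> exp_martingale S n (- tilt n) (h @ h')"
proof -
  define X where "X = reward_sum h S - real n * mean_reward S"
  have "0 < real n" using n by (simp add: n_def)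
  have "R_hat h S - mean_reward S = X / real n"
    using \<open>0 < real n\<close> by (simp add: R_hat_eq X_def n_def field_simps)
  then have "width n < \<bar>X\<bar> / real n"
    using violation by (simp add: n_def abs_divide)
  then have "tilt n * (real n * width n) \<le> tilt n * \<bar>X\<bar>"
    using \<open>0 < real n\<close> width_nonneg by (intro mult_left_mono) (simp_all add: tilt_def field_simps)
  moreover have "tilt n * (real n * width n) = 4 / 5 * real n * (width n)\<^sup>2"
    by (simp add: tilt_def power2_eq_square)
  ultimately have "4 / 5 * real n * (width n)\<^sup>2 \<le> tilt n * X
      \<or> 4 / 5 * real n * (width n)\<^sup>2 \<le> - tilt n * X"
    by (cases "0 \<le> X") (simp_all add: abs_if)
  then show ?thesis
  proof
    assume "4 / 5 * real n * (width n)\<^sup>2 \<le> tilt n * X"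
    then show ?thesis
      using n by (intro disjI1 cap_le_exp_martingale) (simp_all add: n_def X_def)
  next
    assume "4 / 5 * real n * (width n)\<^sup>2 \<le> - tilt n * X"
    then show ?thesis
      using n by (intro disjI2 cap_le_exp_martingale) (simp_all add: n_def X_def)
  qed
qed

lemma bad_event_weight_ge_1:
  assumes S: "S \<in> set enum" and n: "1 \<le> n_pulls h S" "n_pulls h S \<le> T"
    and violation: "width (n_pulls h S) < \<bar>R_hat h S - mean_reward S\<bar>"
  shows "1 \<le> bad_event_weight (h @ h')"
proof -
  define n where "n = n_pulls h S"
  let ?w = "\<lambda>S n. (min cap (exp_martingale S n (tilt n) (h @ h'))
    + min cap (exp_martingale S n (- tilt n) (h @ h'))) / cap"
  have min_nonneg: "0 \<le> min cap (exp_martingale S' n' l h'')" for S' n' l h''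
    using cap_pos by (simp add: exp_martingale_def)
  then have "cap \<le> min cap (exp_martingale S n (tilt n) (h @ h'))
      + min cap (exp_martingale S n (- tilt n) (h @ h'))"
    using confidence_violation_exp_martingale_ge_cap[OF n(1) violation, of h', folded n_def]
    by (smt (verit, best) min_def)
  then have "1 \<le> ?w S n"
    using cap_pos by (simp add: le_divide_eq)
  moreover have w_nonneg: "0 \<le> ?w S' n'" for S' n'
    using cap_pos min_nonneg by (intro divide_nonneg_pos add_nonneg_nonneg) simp_all
  ultimately have "1 \<le> (\<Sum>n\<in>{1..T}. ?w S n)"
    using n by (intro order.trans[OF _ member_le_sum]) (simp_all add: n_def)
  also have "\<dots> \<le> bad_event_weight (h @ h')"
    unfolding bad_event_weight_def using S w_nonneg
    by (intro member_le_sum[where f = "\<lambda>S. \<Sum>n\<in>{1..T}. ?w S n"] sum_nonneg) simp_all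
  finally show ?thesis .
qed

lemma n_pulls_after_phase1:
  assumes h: "reachable [] h" and t: "T1 \<le> t" "t \<le> length h" and S: "S \<in> set enum"
  shows "1 \<le> n_pulls (take t h) S"
proof -
  obtain j where j: "j < length enum" "enum ! j = S"
    using S by (auto simp: in_set_conv_nth)
  have "j < t" using j(1) length_enum_le_T1 t(1) by linarith
  have "fst (h ! j) = ucb (take j h)"
    using reachable_nth[OF h] \<open>j < t\<close> t(2) by simp
  also have "\<dots> = S"
    using \<open>j < t\<close> t j length_enum_le_T1 by (simp add: ucb_tsn_phase1)
  finally have "h ! j \<in> set (filter (\<lambda>p. fst p = S) (take t h))"
    using \<open>j < t\<close> t(2) by (auto simp: in_set_conv_nth intro: exI[of _ j])
  then have "0 < n_pulls (take t h) S"
    unfolding n_pulls_def by (rule length_pos_if_in_set)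
  then show ?thesis by simp
qed

lemma optimistic_gap_le:
  assumes "T1 < Suc (length h)" and "S \<in> set enum"
    and "mean_reward S \<le> R_hat h S + width (n_pulls h S)"
    and "R_hat h (ucb h) \<le> mean_reward (ucb h) + width (n_pulls h (ucb h))"
  shows "mean_reward S - mean_reward (ucb h) \<le> 2 * width (n_pulls h (ucb h))"
  using ucb_tsn_phase2(2)[OF enum_nonempty assms(1,2), of "1 / (real T)\<^sup>2"] assms(3,4)
  by (simp add: ucb_index_eq)

text \<open>Phase 1 has pulled every arm, so no confidence width below is the junk value
  sqrt (9 * L / 0) = 0.\<close>
lemma phase2_round_regret_le:
  assumes h: "reachable [] h" "length h \<le> T" and t: "T1 \<le> t" "t < length h"
  defines "n \<equiv> n_pulls (take t h) (fst (h ! t))"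
  shows "best_mean - mean_reward (fst (h ! t))
    \<le> 18 * sqrt L * (sqrt (real n + 1) - sqrt (real n)) + bad_event_weight h"
proof -
  define h' where "h' = take t h"
  have played: "fst (h ! t) = ucb h'"
    using reachable_nth[OF h(1) t(2)] by (simp add: h'_def)
  obtain S where S: "S \<in> set enum" "mean_reward S = best_mean"
    using best_mean_in by auto
  have pulled: "1 \<le> n_pulls h' S'" "n_pulls h' S' \<le> T" if "S' \<in> set enum" for S'
    using n_pulls_after_phase1[OF h(1) t(1) _ that] n_pulls_le_length[of h' S'] t h(2)
    by (simp_all add: h'_def)
  have h_split: "h = h' @ drop t h" by (simp add: h'_def)
  have "ucb h' \<in> set enum" by (rule ucb_tsn_in_set[OF enum_nonempty])
  show ?thesis
  proof (cases "width (n_pulls h' S) < \<bar>R_hat h' S - mean_reward S\<bar>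
      \<or> width (n_pulls h' (ucb h')) < \<bar>R_hat h' (ucb h') - mean_reward (ucb h')\<bar>")
    case True
    then have "1 \<le> bad_event_weight h"
      using bad_event_weight_ge_1[OF S(1) pulled[OF S(1)]]
        bad_event_weight_ge_1[OF \<open>ucb h' \<in> set enum\<close> pulled[OF \<open>ucb h' \<in> set enum\<close>]]
      by (metis h_split)
    moreover have "0 \<le> 18 * sqrt L * (sqrt (real n + 1) - sqrt (real n))"
      using L_pos by simp
    ultimately show ?thesis
      using best_mean_le_1 mean_reward_bounds[of "fst (h ! t)"] by linarith
  next
    case False
    have "1 \<le> n" using pulled[OF \<open>ucb h' \<in> set enum\<close>] by (simp add: n_def played h'_def)
    have "best_mean - mean_reward (fst (h ! t)) \<le> 2 * width n"
      using optimistic_gap_le[of h' S] False S t by (simp add: played n_def h'_def not_less abs_le_iff)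
    also have "\<dots> \<le> 18 * sqrt L * (sqrt (real n + 1) - sqrt (real n))"
      using width_le_sqrt_increment[OF \<open>1 \<le> n\<close>] by simp
    finally show ?thesis using bad_event_weight_nonneg[of h] by linarith
  qed
qed

lemma potential_snoc:
  assumes "S \<in> set enum"
  shows "potential (h @ [(S, r)]) = potential h + (sqrt (real (n_pulls h S) + 1) - sqrt (real (n_pulls h S)))"
proof -
  have "potential (h @ [(S, r)]) = (\<Sum>S'\<in>set enum. sqrt (real (n_pulls h S'))
      + (if S = S' then sqrt (real (n_pulls h S) + 1) - sqrt (real (n_pulls h S)) else 0))"
    unfolding potential_def by (intro sum.cong) (auto simp: n_pulls_snoc add.commute)
  then show ?thesis
    using assms by (simp add: sum.distrib potential_def)
qed

lemma round_regret_le: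
  assumes h: "reachable [] h" "length h = T" and t: "t < T"
  shows "best_mean - mean_reward (fst (h ! t))
    \<le> (if t < T1 then 1 else 0) + 18 * sqrt L * (potential (take (Suc t) h) - potential (take t h))
      + bad_event_weight h"
proof -
  define n where "n = n_pulls (take t h) (fst (h ! t))"
  have "fst (h ! t) \<in> set enum"
    using reachable_nth[OF h(1)] t h(2) ucb_tsn_in_set[OF enum_nonempty] by simp
  then have "potential (take (Suc t) h) - potential (take t h) = sqrt (real n + 1) - sqrt (real n)"
    using t h(2) potential_snoc[of "fst (h ! t)" "take t h" "snd (h ! t)"]
    by (simp add: take_Suc_conv_app_nth n_def)
  moreover have "0 \<le> 18 * sqrt L * (sqrt (real n + 1) - sqrt (real n))"
    using L_pos by simp
  moreover have "best_mean - mean_reward (fst (h ! t)) \<le> 1"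
    using best_mean_le_1 mean_reward_bounds[of "fst (h ! t)"] by linarith
  moreover have "\<not> t < T1 \<Longrightarrow> best_mean - mean_reward (fst (h ! t))
      \<le> 18 * sqrt L * (sqrt (real n + 1) - sqrt (real n)) + bad_event_weight h"
    using phase2_round_regret_le[OF h(1)] h(2) t by (simp add: n_def)
  ultimately show ?thesis
    using bad_event_weight_nonneg[of h] by (cases "t < T1") simp_all
qed

lemma potential_le: "potential h \<le> sqrt (real (card (set enum)) * real (length h))"
proof -
  have "potential h \<le> sqrt (real (card (set enum)) * (\<Sum>S\<in>set enum. real (n_pulls h S)))"
    unfolding potential_def by (rule sum_sqrt_le_sqrt_card_mult_sum) simp
  also have "\<dots> \<le> sqrt (real (card (set enum)) * real (length h))"
    using sum_n_pulls_le_length[of "set enum" h]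
    by (intro real_sqrt_le_mono mult_left_mono) (simp_all flip: of_nat_sum)
  finally show ?thesis .
qed

lemma pathwise_regret_le:
  assumes h: "reachable [] h" "length h = T"
  shows "real T * best_mean - cumulative_mean h
    \<le> real T1 + 18 * sqrt L * sqrt (real (card (set enum)) * real T) + real T * bad_event_weight h"
proof -
  have "t \<le> T \<Longrightarrow> (\<Sum>j<t. best_mean - mean_reward (fst (h ! j)))
      \<le> real (min t T1) + 18 * sqrt L * potential (take t h) + real t * bad_event_weight h" for t
  proof (induction t)
    case 0
    then show ?case by (simp add: potential_def n_pulls_def)
  next
    case (Suc t)
    have "real (min (Suc t) T1) = real (min t T1) + (if t < T1 then 1 else 0)" by auto
    with Suc show ?case
      using round_regret_le[OF h, of t] by (simp add: algebra_simps)
  qed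
  from this[of T] have "real T * best_mean - cumulative_mean h
      \<le> real T1 + 18 * sqrt L * potential h + real T * bad_event_weight h"
    using h(2) T1_le_T by (simp add: cumulative_mean_def sum_subtractf min_absorb2)
  also have "potential h \<le> sqrt (real (card (set enum)) * real T)"
    using potential_le[of h] h(2) by simp
  finally show ?thesis
    using L_pos by (simp add: mult_left_mono)
qed


lemma bad_event_weight_eq:
  "bad_event_weight = (\<lambda>h. \<Sum>S\<in>set enum. \<Sum>n\<in>{1..T}.
     (1 / cap) * (min cap (exp_martingale S n (tilt n) h) + min cap (exp_martingale S n (- tilt n) h)))"
  by (simp add: fun_eq_iff bad_event_weight_def)

lemma admissible_bad_event_weight: "admissible bad_event_weight"
  unfolding bad_event_weight_eq using cap_pos
  by (intro admissible_sum admissible_cmult admissible_add admissible_truncated_exp_martingale) auto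

lemma expected_bad_event_weight_le:
  "E T bad_event_weight [] \<le> 2 * real (card (set enum)) * real T / cap"
proof -
  let ?M = "\<lambda>S n l h. min cap (exp_martingale S n l h)"
  have adm: "admissible (?M S n l)" for S n l
    using cap_pos by (intro admissible_truncated_exp_martingale) simp
  have "E T bad_event_weight [] = (\<Sum>S\<in>set enum. \<Sum>n\<in>{1..T}.
      E T (\<lambda>h. (1 / cap) * (?M S n (tilt n) h + ?M S n (- tilt n) h)) [])"
    unfolding bad_event_weight_eq
    by (simp only: run_expectation_sum finite_set finite_atLeastAtMost adm admissible_add
        admissible_cmult admissible_sum)
  also have "\<dots> = (\<Sum>S\<in>set enum. \<Sum>n\<in>{1..T}.
      (1 / cap) * (E T (?M S n (tilt n)) [] + E T (?M S n (- tilt n)) []))"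
    by (simp only: run_expectation_cmult run_expectation_add[OF adm adm])
  also have "\<dots> \<le> (\<Sum>S\<in>set enum. \<Sum>n\<in>{1..T}. (1 / cap) * (1 + 1))"
    using run_expectation_truncated_exp_martingale_le[where h = "[]" and c = cap] cap_pos
    by (intro sum_mono mult_left_mono add_mono) (auto simp: exp_martingale_Nil)
  finally show ?thesis by (simp add: mult_ac)
qed

lemma regret_le_phase1_potential_bad:
  "real T * best_mean - exp_reward N Y noise pre ucb T []
    \<le> real T1 + 18 * sqrt L * sqrt (real (card (set enum)) * real T)
      + real T * (2 * real (card (set enum)) * real T / cap)"
proof -
  define C where "C = real T1 + 18 * sqrt L * sqrt (real (card (set enum)) * real T)"
  have "real T * best_mean - exp_reward N Y noise pre ucb T []
      = E T (\<lambda>h. real T * best_mean) [] + E T (\<lambda>h. (- 1) * cumulative_mean h) []"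
    by (simp only: run_expectation_const run_expectation_cmult exp_reward_eq_run_expectation)
  also have "\<dots> = E T (\<lambda>h. real T * best_mean + (- 1) * cumulative_mean h) []"
    by (intro run_expectation_add[symmetric] admissible_const admissible_cmult admissible_cumulative_mean)
  also have "\<dots> \<le> E T (\<lambda>h. C + real T * bad_event_weight h) []"
    using pathwise_regret_le
    by (intro run_expectation_mono admissible_add admissible_const admissible_cmult
        admissible_cumulative_mean admissible_bad_event_weight) (simp_all add: C_def)
  also have "\<dots> = E T (\<lambda>h. C) [] + E T (\<lambda>h. real T * bad_event_weight h) []"
    by (intro run_expectation_add admissible_const admissible_cmult admissible_bad_event_weight)
  also have "\<dots> = C + real T * E T bad_event_weight []"
    by (simp only: run_expectation_const run_expectation_cmult)
  also have "\<dots> \<le> C + real T * (2 * real (card (set enum)) * real T / cap)"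
    using expected_bad_event_weight_le by (intro add_left_mono mult_left_mono) simp_all
  finally show ?thesis by (simp add: C_def)
qed

lemma cube_le_cap: "real T ^ 3 \<le> cap"
proof -
  have "real T ^ 3 = exp (3 * ln (real T))"
    using two_le_T exp_of_nat_mult[of 3 "ln (real T)"] by simp
  also have "\<dots> \<le> cap"
    using two_le_T by (simp add: cap_def L_eq)
  finally show ?thesis .
qed

lemma sqrt_L_le: "sqrt L \<le> 1 + ln (real T)"
proof -
  have "0 < ln (real T)" using two_le_T by simp
  then have "L \<le> (1 + ln (real T))\<^sup>2"
    by (simp add: L_eq power2_eq_square algebra_simps)
  then show ?thesis
    using \<open>0 < ln (real T)\<close> by (simp add: real_sqrt_le_iff real_le_lsqrt)
qed

lemma regret_le:
  "real T * best_mean - exp_reward N Y noise pre ucb T []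
    \<le> 18 * (sqrt (real (card (set enum)) * real T) + real T1) * (1 + ln (real T))"
proof -
  define u where "u = real (card (set enum))"
  have "0 \<le> ln (real T)" using two_le_T by simp
  have "u \<le> real T" using card_le_T1 T1_le_T by (simp add: u_def)
  have "real T * (2 * u * real T) \<le> 2 * real T ^ 3"
    using \<open>u \<le> real T\<close> by (simp add: power3_eq_cube mult_right_mono)
  also have "\<dots> \<le> 2 * cap" using cube_le_cap by simp
  finally have bad: "real T * (2 * u * real T / cap) \<le> 2"
    using cap_pos by (simp add: field_simps)
  have pot: "18 * sqrt L * sqrt (u * real T) \<le> 18 * (1 + ln (real T)) * sqrt (u * real T)"
    using sqrt_L_le by (intro mult_right_mono) (simp_all add: u_def)
  have "2 \<le> real T1" using card_le_T1 two_le_card by simp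
  moreover have "0 \<le> real T1 * ln (real T)" using \<open>0 \<le> ln (real T)\<close> by simp
  moreover have "18 * real T1 * (1 + ln (real T)) = 18 * real T1 + 18 * (real T1 * ln (real T))"
    by (simp add: algebra_simps)
  ultimately have "real T1 + 2 \<le> 18 * real T1 * (1 + ln (real T))" by linarith
  then show ?thesis
    using regret_le_phase1_potential_bad bad pot by (simp add: u_def algebra_simps)
qed

end

lemma ucb_tsn_run_exposure:
  assumes "1 \<le> N" and Y: "\<forall>i<N. \<forall>A\<in>superarms N K. 0 \<le> Y i A \<and> Y i A \<le> 1"
    and "subgaussian_noise noise" and "distinct enum" and enum: "set enum = UE N K Smap H Cl"
    and "2 \<le> card (UE N K Smap H Cl)" "card (UE N K Smap H Cl) \<le> T1" "T1 \<le> T"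
  shows "ucb_tsn_run N noise Y (preimg N K Smap H) enum T1 T"
proof -
  have pre_sub: "preimg N K Smap H S \<subseteq> superarms N K" for S
    by (auto simp: preimg_def)
  have "finite (superarms N K)" by (simp add: superarms_def finite_PiE)
  show ?thesis
  proof unfold_locales
    show "finite (preimg N K Smap H S)" for S
      using pre_sub \<open>finite (superarms N K)\<close> by (rule finite_subset)
    show "preimg N K Smap H S \<noteq> {}" if "S \<in> set enum" for S
      using that enum by (auto simp: UE_def UO_def preimg_def)
    show "0 \<le> Y i A \<and> Y i A \<le> 1" if "A \<in> preimg N K Smap H S" "i < N" for S A i
      using Y that pre_sub by blast
    show "ucb_tsn enum T1 (1 / (real T)\<^sup>2) h \<in> set enum" for h
      using assms(6) enum by (intro ucb_tsn_in_set) auto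
    show "length enum \<le> T1"
      using distinct_card[OF \<open>distinct enum\<close>] enum assms(7) by simp
    show "finite (set enum)" by simp
  qed (use assms sets_ucb_tsn_history in auto)
qed

lemma mean_exposure_reward_eq:
  "mean_exposure_reward N K Smap H Y S =
    (\<Sum>A\<in>preimg N K Smap H S. (\<Sum>i<N. Y i A) / real N) / real (card (preimg N K Smap H S))"
  unfolding mean_exposure_reward_def Ytil_def
  by (simp add: sum_divide_distrib[symmetric] sum.swap[of _ "{..<N}"])

lemma regret_ucb_tsn_le:
  assumes "1 \<le> N" and "\<forall>i<N. \<forall>A\<in>superarms N K. 0 \<le> Y i A \<and> Y i A \<le> 1"
    and "subgaussian_noise noise" and "distinct enum" and "set enum = UE N K Smap H Cl"
    and "2 \<le> card (UE N K Smap H Cl)" "card (UE N K Smap H Cl) \<le> T1" "T1 \<le> T"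
  shows "regret N K Smap H Cl Y noise (ucb_tsn enum T1 (1 / (real T)\<^sup>2)) T
    \<le> 18 * (sqrt (real (card (UE N K Smap H Cl)) * real T) + real T1) * (1 + ln (real T))"
proof -
  interpret ucb_tsn_run N noise Y "preimg N K Smap H" enum T1 T
    using assms by (rule ucb_tsn_run_exposure)
  have "mean_exposure_reward N K Smap H Y S = mean_reward S" if "S \<in> set enum" for S
    using that by (simp add: mean_exposure_reward_eq mean_reward_def unit_mean_def)
  then have "mean_exposure_reward N K Smap H Y ` set enum = mean_reward ` set enum"
    by (rule image_cong[OF refl])
  then show ?thesis
    using regret_le assms(5) by (simp add: regret_def best_mean_def)
qed

theorem theorem4:
  "\<exists>C::real. C > 0 \<and> (\<exists>k::nat.
    \<forall>(N::nat) (K::nat) (H::nat \<Rightarrow> nat \<Rightarrow> real) (Smap::nat \<Rightarrow> (nat \<Rightarrow> nat) \<Rightarrow> (nat \<Rightarrow> nat \<Rightarrow> real) \<Rightarrow> 'e)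
      (Cl::nat set set) (Y::nat \<Rightarrow> (nat \<Rightarrow> nat) \<Rightarrow> real) (noise::real measure)
      (enum::(nat \<Rightarrow> 'e) list) (T::nat) (T1::nat).
      1 \<le> N \<longrightarrow> 1 \<le> K \<longrightarrow>
      partition_on {..<N} Cl \<longrightarrow>
      (\<forall>i<N. \<forall>A\<in>superarms N K. 0 \<le> Y i A \<and> Y i A \<le> 1) \<longrightarrow>
      subgaussian_noise noise \<longrightarrow>
      distinct enum \<longrightarrow> set enum = UE N K Smap H Cl \<longrightarrow>
      2 \<le> card (UE N K Smap H Cl) \<longrightarrow> card (UE N K Smap H Cl) \<le> T \<longrightarrow>
      card (UE N K Smap H Cl) \<le> T1 \<longrightarrow> T1 \<le> T \<longrightarrow>
      regret N K Smap H Cl Y noise (ucb_tsn enum T1 (1 / (real T)\<^sup>2)) T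
        \<le> C * (sqrt (real (card (UE N K Smap H Cl)) * real T) + real T1) * (1 + ln (real T)) ^ k)"
proof (intro exI[of _ "18::real"] conjI exI[of _ "1::nat"] allI impI)
  show "(18::real) > 0" by simp
qed (unfold power_one_right, rule regret_ucb_tsn_le; assumption)

end
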